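(* Let $T\in\mathbb{R}^{n\times n}$ be substochastic and such that $A=I-T$ is a lower Hessenberg invertible M-matrix. Let $P_{GS}=\operatorname{tril}(A)^{-1}(\operatorname{tril}(A)-A)$ and $P_{AGS}=\operatorname{triu}(A)^{-1}(\operatorname{triu}(A)-A)$. Then $\rho(P_{GS})\geq\rho(P_{AGS})$.
   Context: $T$ is substochastic if $T\geq 0$ entrywise and $T\mathbf{1}\leq\mathbf{1}$, with $\mathbf{1}$ the all-ones vector. $A$ is lower Hessenberg if $A_{ij}=0$ whenever $j>i+1$. $\operatorname{tril}(A)$ (resp. $\operatorname{triu}(A)$) is the lower (resp. upper) triangular part of $A$ including the diagonal. $\rho(\cdot)$ denotes the spectral radius. *)

theory Defs
  imports "Jordan_Normal_Form.Spectral_Radius"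
begin

definition nonneg_mat :: "real mat \<Rightarrow> bool" where
  "nonneg_mat A \<longleftrightarrow> (\<forall>i < dim_row A. \<forall>j < dim_col A. A $$ (i, j) \<ge> 0)"

definition substochastic :: "real mat \<Rightarrow> bool" where
  "substochastic T \<longleftrightarrow> nonneg_mat T \<and>
     (\<forall>i < dim_row T. (\<Sum>j < dim_col T. T $$ (i, j)) \<le> 1)"

definition lower_hessenberg :: "real mat \<Rightarrow> bool" where
  "lower_hessenberg A \<longleftrightarrow>
     (\<forall>i < dim_row A. \<forall>j < dim_col A. j > i + 1 \<longrightarrow> A $$ (i, j) = 0)"

definition tril :: "real mat \<Rightarrow> real mat" where
  "tril A = mat (dim_row A) (dim_col A) (\<lambda>(i, j). if j \<le> i then A $$ (i, j) else 0)"

definition triu :: "real mat \<Rightarrow> real mat" where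
  "triu A = mat (dim_row A) (dim_col A) (\<lambda>(i, j). if i \<le> j then A $$ (i, j) else 0)"

definition rho :: "real mat \<Rightarrow> real" where
  "rho A = spectral_radius (map_mat complex_of_real A)"

text \<open>Matrix inverse (meaningful for invertible matrices).\<close>
definition mat_inv :: "real mat \<Rightarrow> real mat" where
  "mat_inv A = (SOME B. inverts_mat A B \<and> inverts_mat B A)"

definition M_matrix :: "real mat \<Rightarrow> bool" where
  "M_matrix A \<longleftrightarrow> square_mat A \<and>
     (\<exists>s B. B \<in> carrier_mat (dim_row A) (dim_row A) \<and> nonneg_mat B \<and>
            A = s \<cdot>\<^sub>m 1\<^sub>m (dim_row A) - B \<and> s \<ge> rho B)"

definition invertible_M_matrix :: "real mat \<Rightarrow> bool" where
  "invertible_M_matrix A \<longleftrightarrow> M_matrix A \<and> invertible_mat A"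

end

theory Submission
  imports Defs
begin

(* Write A = I - T, a Z-matrix, and let \<mu> be an eigenvalue of P_AGS with eigenvector z,
   t = |\<mu>| > 0. Taking moduli in \<mu> triu(A) z = (triu(A) - A) z gives
   t triu(A) |z| <= (triu(A) - A) |z| entrywise. If t >= 1 this gives A |z| <= 0, i.e.
   |z| <= T |z|, and a maximum principle for the substochastic T then makes I - T singular;
   so t < 1.
   For lower Hessenberg A the strictly upper part of row i is the single entry (i, i+1), so the
   rescaled vector y_i = t^i |z_i| satisfies t tril(A) y <= (tril(A) - A) y. As tril(A)^-1 >= 0,
   this is t y <= P_GS y with P_GS >= 0 and y >= 0, and the Collatz-Wielandt bound gives
   t <= rho(P_GS). *)

lemma mult_mat_vec_index_sum:
  assumes "A \<in> carrier_mat nr nc" "v \<in> carrier_vec nc" "i < nr"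
  shows "(A *\<^sub>v v) $ i = (\<Sum>j<nc. A $$ (i, j) * v $ j)"
  using assms by (auto simp: scalar_prod_def lessThan_atLeast0 intro!: sum.cong)

lemma mult_mat_index_sum:
  assumes "A \<in> carrier_mat nr n" "B \<in> carrier_mat n nc" "i < nr" "k < nc"
  shows "(A * B) $$ (i, k) = (\<Sum>j<n. A $$ (i, j) * B $$ (j, k))"
  using assms by (auto simp: scalar_prod_def lessThan_atLeast0 intro!: sum.cong)

lemma of_real_mult_mat_vec_index_sum:
  assumes "M \<in> carrier_mat nr nc" "z \<in> carrier_vec nc" "i < nr"
  shows "(map_mat complex_of_real M *\<^sub>v z) $ i = (\<Sum>j<nc. complex_of_real (M $$ (i, j)) * z $ j)"
  using assms by (subst mult_mat_vec_index_sum[of _ nr nc]) auto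

lemma mult_mat_vec_zero:
  assumes "A \<in> carrier_mat nr nc"
  shows "A *\<^sub>v 0\<^sub>v nc = 0\<^sub>v nr"
  using assms by (intro eq_vecI) (auto simp: scalar_prod_def)

lemma smult_mat_mult_mat_vec:
  fixes A :: "'a :: comm_semiring_1 mat"
  assumes "v \<in> carrier_vec (dim_col A)"
  shows "(c \<cdot>\<^sub>m A) *\<^sub>v v = c \<cdot>\<^sub>v (A *\<^sub>v v)"
  using assms by (intro eq_vecI) (auto simp: scalar_prod_def sum_distrib_left ac_simps)

lemma one_minus_mult_mat_vec:
  fixes T :: "'a :: ring_1 mat"
  assumes "T \<in> carrier_mat n n" "v \<in> carrier_vec n"
  shows "(1\<^sub>m n - T) *\<^sub>v v = v - T *\<^sub>v v"
  by (subst minus_mult_distrib_mat_vec[OF one_carrier_mat assms]) (use assms in simp)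

lemma smult_vec_mono:
  fixes v w :: "real vec"
  assumes "0 \<le> a" "v \<le> w"
  shows "a \<cdot>\<^sub>v v \<le> a \<cdot>\<^sub>v w"
  using assms by (auto simp: less_eq_vec_def intro: mult_left_mono)

lemma vec_nonzero_index:
  assumes "v \<in> carrier_vec n" "v \<noteq> 0\<^sub>v n"
  obtains i where "i < n" "v $ i \<noteq> 0"
proof -
  have "\<exists>i<n. v $ i \<noteq> 0"
  proof (rule ccontr)
    assume "\<not> (\<exists>i<n. v $ i \<noteq> 0)"
    then have "v = 0\<^sub>v n" using assms(1) by (intro eq_vecI) auto
    with assms(2) show False ..
  qed
  then show ?thesis using that by blast
qed

lemma sum_lessThan_split_at:
  fixes i n :: nat
  assumes i: "i < n" and lower: "\<And>j. j < i \<Longrightarrow> f j = g j"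
    and upper: "\<And>j. i < j \<Longrightarrow> j < n \<Longrightarrow> f j = h j"
  shows "(\<Sum>j<n. f j) = (\<Sum>j<i. g j) + f i + (\<Sum>j\<in>{i<..<n}. h j)"
proof -
  have split: "{..<n} = {..<i} \<union> insert i {i<..<n}" using i by (auto simp: nat_neq_iff)
  have "(\<Sum>j<n. f j) = (\<Sum>j<i. f j) + (\<Sum>j\<in>insert i {i<..<n}. f j)"
    unfolding split by (rule sum.union_disjoint) auto
  moreover have "(\<Sum>j<i. f j) = (\<Sum>j<i. g j)" using lower by (intro sum.cong) auto
  moreover have "(\<Sum>j\<in>{i<..<n}. f j) = (\<Sum>j\<in>{i<..<n}. h j)" using upper by (intro sum.cong) auto
  ultimately show ?thesis by (simp add: add.assoc)
qed

section \<open>Nonnegative matrices\<close>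

lemma nonneg_mat_mult_vec_mono:
  assumes M: "M \<in> carrier_mat nr nc" "nonneg_mat M" and vw: "v \<le> w" "w \<in> carrier_vec nc"
  shows "M *\<^sub>v v \<le> M *\<^sub>v w"
proof -
  have v: "v \<in> carrier_vec nc" and le: "\<And>j. j < nc \<Longrightarrow> v $ j \<le> w $ j"
    using vw by (auto simp: less_eq_vec_def)
  have "(M *\<^sub>v v) $ i \<le> (M *\<^sub>v w) $ i" if "i < nr" for i
    unfolding mult_mat_vec_index_sum[OF M(1) v that] mult_mat_vec_index_sum[OF M(1) vw(2) that]
    using M that le by (intro sum_mono mult_left_mono) (auto simp: nonneg_mat_def)
  then show ?thesis using M by (auto simp: less_eq_vec_def)
qed

lemma nonneg_mat_mult:
  assumes "A \<in> carrier_mat nr n" "B \<in> carrier_mat n nc" "nonneg_mat A" "nonneg_mat B"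
  shows "nonneg_mat (A * B)"
  using assms unfolding nonneg_mat_def
  by (auto simp: scalar_prod_def intro!: sum_nonneg)

lemma nonneg_mat_pow:
  assumes "M \<in> carrier_mat n n" "nonneg_mat M"
  shows "nonneg_mat (M ^\<^sub>m k)"
proof (induction k)
  case 0
  show ?case using assms(1) by (simp add: nonneg_mat_def)
next
  case (Suc k)
  then show ?case using assms by (simp add: nonneg_mat_mult[of _ n n])
qed

lemma nonneg_mat_pow_mult_vec_ge:
  assumes M: "M \<in> carrier_mat n n" "nonneg_mat M" and y: "y \<in> carrier_vec n"
    and t: "0 \<le> t" and ty: "t \<cdot>\<^sub>v y \<le> M *\<^sub>v y"
  shows "t ^ k \<cdot>\<^sub>v y \<le> M ^\<^sub>m k *\<^sub>v y"
proof (induction k)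
  case 0
  show ?case using M y by simp
next
  case (Suc k)
  have Mk: "M ^\<^sub>m k \<in> carrier_mat n n" using M by simp
  have "t ^ Suc k \<cdot>\<^sub>v y = t \<cdot>\<^sub>v (t ^ k \<cdot>\<^sub>v y)" by (simp add: smult_smult_assoc)
  also have "\<dots> \<le> t \<cdot>\<^sub>v (M ^\<^sub>m k *\<^sub>v y)" by (rule smult_vec_mono[OF t Suc])
  also have "\<dots> = M ^\<^sub>m k *\<^sub>v (t \<cdot>\<^sub>v y)" using Mk y by (simp add: mult_mat_vec)
  also have "\<dots> \<le> M ^\<^sub>m k *\<^sub>v (M *\<^sub>v y)"
    using nonneg_mat_mult_vec_mono[OF Mk nonneg_mat_pow[OF M] ty] M y by simp
  also have "\<dots> = M ^\<^sub>m Suc k *\<^sub>v y" using M y by (simp add: assoc_mult_mat_vec[of _ n n])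
  finally show ?case .
qed

lemma norm_mult_vec_le_nonneg_mat:
  assumes M: "M \<in> carrier_mat nr nc" "nonneg_mat M" and z: "z \<in> carrier_vec nc"
  shows "map_vec cmod (map_mat complex_of_real M *\<^sub>v z) \<le> M *\<^sub>v map_vec cmod z"
proof -
  have "cmod ((map_mat complex_of_real M *\<^sub>v z) $ i) \<le> (M *\<^sub>v map_vec cmod z) $ i" if "i < nr" for i
  proof -
    have "cmod ((map_mat complex_of_real M *\<^sub>v z) $ i)
        \<le> (\<Sum>j<nc. cmod (complex_of_real (M $$ (i, j)) * z $ j))"
      unfolding of_real_mult_mat_vec_index_sum[OF M(1) z that] by (rule norm_sum)
    also have "\<dots> = (M *\<^sub>v map_vec cmod z) $ i"
      unfolding mult_mat_vec_index_sum[OF M(1) map_carrier_vec[THEN iffD2, OF z] that]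
      using M z that by (auto simp: norm_mult nonneg_mat_def intro!: sum.cong)
    finally show ?thesis .
  qed
  then show ?thesis using M(1) by (simp add: less_eq_vec_def)
qed

section \<open>Inverses and singularity\<close>

lemma mat_inv_correct:
  assumes A: "A \<in> carrier_mat n n" and inv: "invertible_mat A"
  shows "mat_inv A \<in> carrier_mat n n" "A * mat_inv A = 1\<^sub>m n" "mat_inv A * A = 1\<^sub>m n"
proof -
  have "\<exists>B. inverts_mat A B \<and> inverts_mat B A"
    using inv unfolding invertible_mat_def by blast
  then have B: "inverts_mat A (mat_inv A) \<and> inverts_mat (mat_inv A) A"
    unfolding mat_inv_def by (rule someI_ex)
  then have AB: "A * mat_inv A = 1\<^sub>m n" and BA: "mat_inv A * A = 1\<^sub>m (dim_row (mat_inv A))"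
    using A by (auto simp: inverts_mat_def)
  have "dim_col (mat_inv A) = n" using arg_cong[OF AB, of dim_col] by simp
  moreover have "dim_row (mat_inv A) = n" using arg_cong[OF BA, of dim_col] A by simp
  ultimately show "mat_inv A \<in> carrier_mat n n" by auto
  show "A * mat_inv A = 1\<^sub>m n" "mat_inv A * A = 1\<^sub>m n"
    using AB BA \<open>dim_row (mat_inv A) = n\<close> by simp_all
qed

lemma mat_inv_mult_carrier:
  assumes "M \<in> carrier_mat n n" "invertible_mat M" "N \<in> carrier_mat n n"
  shows "mat_inv M * N \<in> carrier_mat n n"
  using mat_inv_correct(1)[OF assms(1,2)] assms(3) by (rule mult_carrier_mat)

lemma invertible_mat_if_det_nonzero:
  assumes A: "(A :: real mat) \<in> carrier_mat n n" and "det A \<noteq> 0"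
  shows "invertible_mat A"
proof -
  obtain B where "B \<in> carrier_mat n n" "B * A = 1\<^sub>m n" "A * B = 1\<^sub>m n"
    using det_non_zero_imp_unit[OF assms, of undefined] unfolding Units_def ring_mat_def by auto
  then show ?thesis using A unfolding invertible_mat_def inverts_mat_def square_mat.simps by auto
qed

definition pad_rows :: "real mat \<Rightarrow> nat set \<Rightarrow> real mat" where
  "pad_rows A K =
     mat (dim_row A) (dim_col A) (\<lambda>(i, j). if i \<in> K then A $$ (i, j) else of_bool (i = j))"

definition pad_block :: "real mat \<Rightarrow> nat set \<Rightarrow> real mat" where
  "pad_block A K =
     mat (dim_row A) (dim_col A) (\<lambda>(i, j). if i \<in> K \<and> j \<in> K then A $$ (i, j) else of_bool (i = j))"

text \<open>If the rows of A indexed by K vanish outside the columns K, the K x K block of a right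
  inverse of A is a right inverse of the K x K block of A.\<close>
lemma pad_rows_mult_pad_block:
  assumes A: "A \<in> carrier_mat n n" and B: "B \<in> carrier_mat n n" and AB: "A * B = 1\<^sub>m n"
    and closed: "\<And>i j. i \<in> K \<Longrightarrow> j < n \<Longrightarrow> j \<notin> K \<Longrightarrow> A $$ (i, j) = 0"
  shows "pad_rows A K * pad_block B K = 1\<^sub>m n"
proof (rule eq_matI)
  have A': "pad_rows A K \<in> carrier_mat n n" and B': "pad_block B K \<in> carrier_mat n n"
    using A B by (simp_all add: pad_rows_def pad_block_def)
  fix i k assume "i < dim_row (1\<^sub>m n :: real mat)" "k < dim_col (1\<^sub>m n :: real mat)"
  then have i: "i < n" and k: "k < n" by auto
  show "(pad_rows A K * pad_block B K) $$ (i, k) = 1\<^sub>m n $$ (i, k)"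
  proof (cases "i \<in> K")
    case True
    have "(pad_rows A K * pad_block B K) $$ (i, k)
        = (\<Sum>j<n. if k \<in> K then A $$ (i, j) * B $$ (j, k) else 0)"
      unfolding mult_mat_index_sum[OF A' B' i k]
      by (rule sum.cong) (use A B True closed i k in \<open>auto simp: pad_rows_def pad_block_def\<close>)
    also have "\<dots> = (if k \<in> K then (A * B) $$ (i, k) else 0)"
      using mult_mat_index_sum[OF A B i k] by simp
    finally show ?thesis using AB True i k by auto
  next
    case False
    have "(pad_rows A K * pad_block B K) $$ (i, k) = (\<Sum>j<n. if j = i then pad_block B K $$ (i, k) else 0)"
      unfolding mult_mat_index_sum[OF A' B' i k]
      by (rule sum.cong) (use A False i in \<open>auto simp: pad_rows_def\<close>)
    then show ?thesis using B False i k by (simp add: pad_block_def)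
  qed
qed (use A B in \<open>simp_all add: pad_rows_def pad_block_def\<close>)

lemma not_invertible_if_block_kernel:
  assumes A: "(A :: real mat) \<in> carrier_mat n n"
    and closed: "\<And>i j. i \<in> K \<Longrightarrow> j < n \<Longrightarrow> j \<notin> K \<Longrightarrow> A $$ (i, j) = 0"
    and v: "v \<in> carrier_vec n" "v \<noteq> 0\<^sub>v n" "\<And>j. j < n \<Longrightarrow> j \<notin> K \<Longrightarrow> v $ j = 0"
    and ker: "\<And>i. i < n \<Longrightarrow> i \<in> K \<Longrightarrow> (A *\<^sub>v v) $ i = 0"
  shows "\<not> invertible_mat A"
proof
  assume "invertible_mat A"
  note B = mat_inv_correct[OF A this]
  let ?A' = "pad_rows A K" and ?B' = "pad_block (mat_inv A) K"
  have A': "?A' \<in> carrier_mat n n" and B': "?B' \<in> carrier_mat n n"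
    using A B(1) by (simp_all add: pad_rows_def pad_block_def)
  have "?B' * ?A' = 1\<^sub>m n"
    using mat_mult_left_right_inverse[OF A' B' pad_rows_mult_pad_block[OF A B(1,2) closed]] .
  moreover have "?A' *\<^sub>v v = 0\<^sub>v n"
  proof (rule eq_vecI)
    fix i assume "i < dim_vec (0\<^sub>v n :: real vec)"
    then have i: "i < n" by simp
    show "(?A' *\<^sub>v v) $ i = 0\<^sub>v n $ i"
    proof (cases "i \<in> K")
      case True
      have "(?A' *\<^sub>v v) $ i = (A *\<^sub>v v) $ i"
        unfolding mult_mat_vec_index_sum[OF A' v(1) i] mult_mat_vec_index_sum[OF A v(1) i]
        using A True i by (intro sum.cong) (auto simp: pad_rows_def)
      then show ?thesis using ker[OF i True] i by simp
    next
      case False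
      have "(?A' *\<^sub>v v) $ i = (\<Sum>j<n. if j = i then v $ i else 0)"
        unfolding mult_mat_vec_index_sum[OF A' v(1) i]
        using A False i by (intro sum.cong) (auto simp: pad_rows_def)
      then show ?thesis using v(3)[OF i False] i by simp
    qed
  qed (use A' in simp)
  ultimately have "v = ?B' *\<^sub>v 0\<^sub>v n" using A' B' v(1) by (metis assoc_mult_mat_vec one_mult_mat_vec)
  also have "\<dots> = 0\<^sub>v n" by (rule mult_mat_vec_zero[OF B'])
  finally show False using v(2) by simp
qed

lemma not_invertible_one_minus_if_closed_stochastic_rows:
  assumes T: "(T :: real mat) \<in> carrier_mat n n" and K: "i0 \<in> K" "K \<subseteq> {..<n}"
    and closed: "\<And>i j. i \<in> K \<Longrightarrow> j < n \<Longrightarrow> j \<notin> K \<Longrightarrow> T $$ (i, j) = 0"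
    and stochastic: "\<And>i. i \<in> K \<Longrightarrow> (\<Sum>j<n. T $$ (i, j)) = 1"
  shows "\<not> invertible_mat (1\<^sub>m n - T)"
proof (rule not_invertible_if_block_kernel)
  define v :: "real vec" where "v = vec n (\<lambda>j. of_bool (j \<in> K))"
  show A: "1\<^sub>m n - T \<in> carrier_mat n n" using T by auto
  show v: "v \<in> carrier_vec n" by (simp add: v_def)
  show "v \<noteq> 0\<^sub>v n"
  proof
    assume "v = 0\<^sub>v n"
    then have "v $ i0 = 0" using K by auto
    then show False using K by (auto simp: v_def)
  qed
  show "v $ j = 0" if "j < n" "j \<notin> K" for j using that by (simp add: v_def)
  show "(1\<^sub>m n - T) $$ (i, j) = 0" if "i \<in> K" "j < n" "j \<notin> K" for i j
    using that T K(2) closed[OF that] by auto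
  show "((1\<^sub>m n - T) *\<^sub>v v) $ i = 0" if "i < n" "i \<in> K" for i
  proof -
    have "(T *\<^sub>v v) $ i = (\<Sum>j<n. T $$ (i, j))"
      unfolding mult_mat_vec_index_sum[OF T v that(1)]
    proof (rule sum.cong)
      show "T $$ (i, j) * v $ j = T $$ (i, j)" if "j \<in> {..<n}" for j
        using that closed[OF \<open>i \<in> K\<close>] by (cases "j \<in> K") (auto simp: v_def)
    qed simp
    then show ?thesis using T v that stochastic[OF that(2)] by (simp add: one_minus_mult_mat_vec v_def)
  qed
qed

lemma substochastic_row_at_max:
  assumes T: "T \<in> carrier_mat n n" "substochastic T" and x: "x \<in> carrier_vec n" "x \<le> T *\<^sub>v x"
    and i: "i < n" and max: "\<forall>j<n. x $ j \<le> x $ i" and pos: "0 < x $ i"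
  shows "(\<Sum>j<n. T $$ (i, j)) = 1" and "\<And>j. j < n \<Longrightarrow> x $ j < x $ i \<Longrightarrow> T $$ (i, j) = 0"
proof -
  have Tnn: "\<And>j. j < n \<Longrightarrow> 0 \<le> T $$ (i, j)" and row: "(\<Sum>j<n. T $$ (i, j)) \<le> 1"
    using T i by (auto simp: substochastic_def nonneg_mat_def)
  have ge: "x $ i \<le> (\<Sum>j<n. T $$ (i, j) * x $ j)"
    using x i mult_mat_vec_index_sum[OF T(1) x(1) i] by (auto simp: less_eq_vec_def)
  have le: "(\<Sum>j<n. T $$ (i, j) * x $ j) \<le> (\<Sum>j<n. T $$ (i, j) * x $ i)"
    using Tnn max by (intro sum_mono mult_left_mono) auto
  have eq: "(\<Sum>j<n. T $$ (i, j) * x $ i) = x $ i * (\<Sum>j<n. T $$ (i, j))"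
    by (simp add: sum_distrib_left mult.commute)
  then show one: "(\<Sum>j<n. T $$ (i, j)) = 1"
    using ge le row pos by (smt (verit) mult_le_cancel_left1)
  have "(\<Sum>j<n. T $$ (i, j) * (x $ i - x $ j)) = 0"
    using ge le eq one by (simp add: right_diff_distrib sum_subtractf)
  moreover have "\<And>j. j < n \<Longrightarrow> 0 \<le> T $$ (i, j) * (x $ i - x $ j)" using Tnn max by simp
  ultimately have "\<And>j. j < n \<Longrightarrow> T $$ (i, j) * (x $ i - x $ j) = 0"
    by (subst (asm) sum_nonneg_eq_0_iff) auto
  then show "\<And>j. j < n \<Longrightarrow> x $ j < x $ i \<Longrightarrow> T $$ (i, j) = 0" by force
qed

text \<open>Maximum principle: the coordinates where x is maximal form a closed class of T on which
  T is stochastic.\<close>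
lemma not_invertible_one_minus_substochastic:
  assumes T: "T \<in> carrier_mat n n" "substochastic T"
    and x: "x \<in> carrier_vec n" "0\<^sub>v n \<le> x" "x \<noteq> 0\<^sub>v n" "x \<le> T *\<^sub>v x"
  shows "\<not> invertible_mat (1\<^sub>m n - T)"
proof -
  obtain k where k: "k < n" "x $ k \<noteq> 0" using vec_nonzero_index[OF x(1,3)] .
  define m where "m = Max ((\<lambda>j. x $ j) ` {..<n})"
  define K where "K = {i. i < n \<and> x $ i = m}"
  have xm: "\<forall>j<n. x $ j \<le> m" unfolding m_def by auto
  have "m \<in> (\<lambda>j. x $ j) ` {..<n}" unfolding m_def using k(1) by (intro Max_in) auto
  then obtain i0 where i0: "i0 \<in> K" unfolding K_def by auto
  have "0 \<le> x $ k" "x $ k \<le> m" using x(1,2) k(1) xm by (simp_all add: less_eq_vec_def)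
  then have m: "0 < m" using k(2) by linarith
  have at_max1: "(\<Sum>j<n. T $$ (i, j)) = 1"
    and at_max2: "\<And>j. j < n \<Longrightarrow> x $ j < x $ i \<Longrightarrow> T $$ (i, j) = 0" if "i \<in> K" for i
  proof -
    have i: "i < n" "x $ i = m" using that by (simp_all add: K_def)
    have max: "\<forall>j<n. x $ j \<le> x $ i" and pos: "0 < x $ i" using xm m i(2) by simp_all
    note at_max = substochastic_row_at_max[OF T x(1,4) i(1) max pos]
    show "(\<Sum>j<n. T $$ (i, j)) = 1" by (rule at_max(1))
    show "T $$ (i, j) = 0" if "j < n" "x $ j < x $ i" for j using at_max(2)[OF that] .
  qed
  show ?thesis
  proof (rule not_invertible_one_minus_if_closed_stochastic_rows[OF T(1) i0])
    show "K \<subseteq> {..<n}" by (auto simp: K_def)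
    show "T $$ (i, j) = 0" if "i \<in> K" "j < n" "j \<notin> K" for i j
      using at_max2[OF that(1,2)] xm that by (auto simp: K_def less_le)
  qed (rule at_max1)
qed

lemma substochastic_diag_less_1:
  assumes T: "T \<in> carrier_mat n n" "substochastic T" and inv: "invertible_mat (1\<^sub>m n - T)"
    and i: "i < n"
  shows "T $$ (i, i) < 1"
proof (rule ccontr)
  assume "\<not> T $$ (i, i) < 1"
  have "(T *\<^sub>v unit_vec n i) $ r = T $$ (r, i)" if "r < n" for r
  proof -
    have "(T *\<^sub>v unit_vec n i) $ r = (\<Sum>j<n. if j = i then T $$ (r, j) else 0)"
      unfolding mult_mat_vec_index_sum[OF T(1) unit_vec_carrier that]
      by (rule sum.cong) (auto simp: unit_vec_def)
    then show ?thesis using i by simp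
  qed
  moreover have "unit_vec n i $ r \<le> T $$ (r, i)" if "r < n" for r
    using T that i \<open>\<not> T $$ (i, i) < 1\<close>
    by (cases "r = i") (auto simp: substochastic_def nonneg_mat_def)
  ultimately have "unit_vec n i \<le> T *\<^sub>v unit_vec n i"
    using T(1) by (simp add: less_eq_vec_def)
  moreover have "0\<^sub>v n \<le> (unit_vec n i :: real vec)" by (simp add: less_eq_vec_def unit_vec_def)
  moreover have "unit_vec n i \<noteq> 0\<^sub>v n"
  proof
    assume "unit_vec n i = 0\<^sub>v n"
    then have "unit_vec n i $ i = 0" using i by simp
    then show False using i by simp
  qed
  ultimately show False
    using not_invertible_one_minus_substochastic[OF T unit_vec_carrier] inv by blast
qed

section \<open>Spectral radius\<close>

lemma rho_nonneg:
  assumes "M \<in> carrier_mat n n" "0 < n"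
  shows "0 \<le> rho M"
  using spectral_radius_mem_max(1)[of "map_mat complex_of_real M" n] assms
  unfolding rho_def by auto

lemma rho_le_if_eigenvalues_le:
  assumes M: "M \<in> carrier_mat n n" "0 < n" and r: "0 \<le> r"
    and ev: "\<And>\<mu>. \<mu> \<in> spectrum (map_mat complex_of_real M) \<Longrightarrow> \<mu> \<noteq> 0 \<Longrightarrow> cmod \<mu> \<le> r"
  shows "rho M \<le> r"
proof -
  obtain \<mu> where "\<mu> \<in> spectrum (map_mat complex_of_real M)" "rho M = cmod \<mu>"
    using spectral_radius_mem_max(1)[of "map_mat complex_of_real M" n] M unfolding rho_def by auto
  then show ?thesis using ev r by (cases "\<mu> = 0") auto
qed

lemma rho_smult_le:
  assumes M: "M \<in> carrier_mat n n" "0 < n" and c: "c \<noteq> 0"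
  shows "rho (c \<cdot>\<^sub>m M) \<le> \<bar>c\<bar> * rho M"
proof (rule rho_le_if_eigenvalues_le)
  let ?M = "map_mat complex_of_real M"
  have Mc: "?M \<in> carrier_mat n n" using M by simp
  fix \<mu> assume "\<mu> \<in> spectrum (map_mat complex_of_real (c \<cdot>\<^sub>m M))"
  then obtain v where v: "v \<in> carrier_vec n" "v \<noteq> 0\<^sub>v n"
    and "map_mat complex_of_real (c \<cdot>\<^sub>m M) *\<^sub>v v = \<mu> \<cdot>\<^sub>v v"
    using M unfolding spectrum_def eigenvalue_def eigenvector_def by auto
  moreover have "map_mat complex_of_real (c \<cdot>\<^sub>m M) = complex_of_real c \<cdot>\<^sub>m ?M"
    by (rule eq_matI) auto
  ultimately have "complex_of_real c \<cdot>\<^sub>v (?M *\<^sub>v v) = \<mu> \<cdot>\<^sub>v v"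
    using Mc v by (simp add: smult_mat_mult_mat_vec)
  then have "inverse (complex_of_real c) \<cdot>\<^sub>v (complex_of_real c \<cdot>\<^sub>v (?M *\<^sub>v v))
      = (\<mu> / complex_of_real c) \<cdot>\<^sub>v v"
    by (simp add: smult_smult_assoc divide_inverse mult.commute)
  then have "?M *\<^sub>v v = (\<mu> / complex_of_real c) \<cdot>\<^sub>v v"
    using c by (simp add: smult_smult_assoc)
  then have "\<mu> / complex_of_real c \<in> spectrum ?M"
    using Mc v unfolding spectrum_def eigenvalue_def eigenvector_def by auto
  then have "cmod (\<mu> / complex_of_real c) \<le> rho M"
    using spectral_radius_mem_max(2)[OF Mc M(2)] unfolding rho_def by blast
  then have "cmod \<mu> / \<bar>c\<bar> \<le> rho M" by (simp add: norm_divide)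
  then show "cmod \<mu> \<le> \<bar>c\<bar> * rho M" using c by (simp add: field_simps)
qed (use assms rho_nonneg in auto)

lemma rho_less_1_pow_bounded:
  assumes M: "M \<in> carrier_mat n n" and "rho M < 1"
  obtains c where "\<And>k i j. i < n \<Longrightarrow> j < n \<Longrightarrow> \<bar>(M ^\<^sub>m k) $$ (i, j)\<bar> \<le> c"
proof -
  let ?M = "map_mat complex_of_real M"
  have Mc: "?M \<in> carrier_mat n n" using M by simp
  obtain c where c: "\<And>k. norm_bound (?M ^\<^sub>m k) c"
    using spectral_radius_jnf_norm_bound_less_1_upper_triangular[OF Mc] assms(2)
    unfolding rho_def by blast
  have "\<bar>(M ^\<^sub>m k) $$ (i, j)\<bar> \<le> c" if "i < n" "j < n" for k i j
  proof -
    have "?M ^\<^sub>m k = map_mat complex_of_real (M ^\<^sub>m k)"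
      by (rule of_real_hom.mat_hom_pow[OF M, symmetric])
    then show ?thesis using c[of k] that M unfolding norm_bound_def by auto
  qed
  then show ?thesis by (rule that)
qed

lemma one_le_rho_if_expanding:
  assumes M: "M \<in> carrier_mat n n" "nonneg_mat M"
    and y: "y \<in> carrier_vec n" "0\<^sub>v n \<le> y" "y \<noteq> 0\<^sub>v n"
    and r: "1 < r" "r \<cdot>\<^sub>v y \<le> M *\<^sub>v y"
  shows "1 \<le> rho M"
proof (rule ccontr)
  assume "\<not> 1 \<le> rho M"
  then obtain c where c: "\<And>k i j. i < n \<Longrightarrow> j < n \<Longrightarrow> \<bar>(M ^\<^sub>m k) $$ (i, j)\<bar> \<le> c"
    using rho_less_1_pow_bounded[OF M(1)] by force
  obtain i where i: "i < n" "y $ i \<noteq> 0" using vec_nonzero_index[OF y(1,3)] .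
  then have yi: "0 < y $ i" using y(1,2) by (auto simp: less_eq_vec_def less_le)
  have grow: "r ^ k * y $ i \<le> (M ^\<^sub>m k *\<^sub>v y) $ i" for k
    using nonneg_mat_pow_mult_vec_ge[OF M y(1), of r k] r i(1) y(1) by (auto simp: less_eq_vec_def)
  have bound: "(M ^\<^sub>m k *\<^sub>v y) $ i \<le> c * (\<Sum>j<n. y $ j)" for k
  proof -
    have "(M ^\<^sub>m k *\<^sub>v y) $ i = (\<Sum>j<n. (M ^\<^sub>m k) $$ (i, j) * y $ j)"
      using M(1) y(1) i(1) by (intro mult_mat_vec_index_sum) auto
    also have "\<dots> \<le> (\<Sum>j<n. c * y $ j)"
      using c[OF i(1)] y(1,2) by (intro sum_mono mult_right_mono) (auto simp: less_eq_vec_def abs_le_iff)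
    finally show ?thesis by (simp add: sum_distrib_left)
  qed
  obtain k where "c * (\<Sum>j<n. y $ j) / y $ i < r ^ k" using real_arch_pow[OF r(1)] by blast
  then show False using grow[of k] bound[of k] yi by (simp add: divide_less_eq)
qed

lemma collatz_wielandt_lower_bound:
  assumes M: "M \<in> carrier_mat n n" "nonneg_mat M"
    and y: "y \<in> carrier_vec n" "0\<^sub>v n \<le> y" "y \<noteq> 0\<^sub>v n"
    and t: "0 < t" "t \<cdot>\<^sub>v y \<le> M *\<^sub>v y"
  shows "t \<le> rho M"
proof (rule ccontr)
  assume "\<not> t \<le> rho M"
  obtain i where "i < n" using vec_nonzero_index[OF y(1,3)] by blast
  then have n: "0 < n" by simp
  define s where "s = (rho M + t) / 2"
  have s: "0 < s" "rho M < s" "s < t"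
    using rho_nonneg[OF M(1) n] \<open>\<not> t \<le> rho M\<close> by (auto simp: s_def)
  have M': "(1 / s) \<cdot>\<^sub>m M \<in> carrier_mat n n" "nonneg_mat ((1 / s) \<cdot>\<^sub>m M)"
    using M s(1) by (auto simp: nonneg_mat_def)
  have "(t / s) \<cdot>\<^sub>v y \<le> ((1 / s) \<cdot>\<^sub>m M) *\<^sub>v y"
    using t(2) s(1) M(1) y(1)
    by (auto simp: smult_mat_mult_mat_vec less_eq_vec_def divide_right_mono)
  moreover have "1 < t / s" using s by simp
  ultimately have "1 \<le> rho ((1 / s) \<cdot>\<^sub>m M)"
    using one_le_rho_if_expanding[OF M' y] by blast
  also have "\<dots> \<le> rho M / s"
    using rho_smult_le[OF M(1) n, of "1 / s"] s(1) by simp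
  finally show False using s by simp
qed

section \<open>Triangular splittings of Z-matrices\<close>

definition Z_matrix :: "real mat \<Rightarrow> bool" where
  "Z_matrix A \<longleftrightarrow> (\<forall>i < dim_row A. \<forall>j < dim_col A. i \<noteq> j \<longrightarrow> A $$ (i, j) \<le> 0)"

lemma Z_matrix_one_minus_nonneg:
  assumes "T \<in> carrier_mat n n" "nonneg_mat T"
  shows "Z_matrix (1\<^sub>m n - T)"
  using assms by (auto simp: Z_matrix_def nonneg_mat_def)

lemma Z_matrix_mult_norm_vec_le:
  assumes M: "M \<in> carrier_mat n n" "Z_matrix M" and diag: "\<And>i. i < n \<Longrightarrow> 0 \<le> M $$ (i, i)"
    and z: "z \<in> carrier_vec n"
  shows "M *\<^sub>v map_vec cmod z \<le> map_vec cmod (map_mat complex_of_real M *\<^sub>v z)"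
proof -
  have "(M *\<^sub>v map_vec cmod z) $ i \<le> cmod ((map_mat complex_of_real M *\<^sub>v z) $ i)" if i: "i < n" for i
  proof -
    let ?a = "complex_of_real (M $$ (i, i)) * z $ i"
    let ?b = "\<lambda>j. complex_of_real (M $$ (i, j)) * z $ j"
    let ?off = "{..<n} - {i}"
    have off: "M $$ (i, j) * cmod (z $ j) = - cmod (?b j)" if "j \<in> ?off" for j
      using M that i by (auto simp: Z_matrix_def norm_mult)
    have "(M *\<^sub>v map_vec cmod z) $ i
        = M $$ (i, i) * cmod (z $ i) + (\<Sum>j\<in>?off. M $$ (i, j) * cmod (z $ j))"
      unfolding mult_mat_vec_index_sum[OF M(1) map_carrier_vec[THEN iffD2, OF z] i]
      using z i by (simp add: sum.remove[of "{..<n}" i])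
    also have "(\<Sum>j\<in>?off. M $$ (i, j) * cmod (z $ j)) = - (\<Sum>j\<in>?off. cmod (?b j))"
      unfolding sum_negf[symmetric] by (rule sum.cong) (simp_all add: off)
    also have "M $$ (i, i) * cmod (z $ i) = cmod ?a" using diag[OF i] by (simp add: norm_mult)
    also have "cmod ?a + - (\<Sum>j\<in>?off. cmod (?b j)) \<le> cmod ?a - cmod (sum ?b ?off)"
      using norm_sum[of ?b ?off] by linarith
    also have "\<dots> \<le> cmod (?a + sum ?b ?off)" by (rule norm_diff_ineq)
    also have "?a + sum ?b ?off = (map_mat complex_of_real M *\<^sub>v z) $ i"
      unfolding of_real_mult_mat_vec_index_sum[OF M(1) z i] using i
      by (simp add: sum.remove[of "{..<n}" i])
    finally show ?thesis .
  qed
  then show ?thesis using M(1) by (simp add: less_eq_vec_def)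
qed

lemma tril_carrier: "A \<in> carrier_mat n n \<Longrightarrow> tril A \<in> carrier_mat n n"
  by (simp add: tril_def)

lemma triu_carrier: "A \<in> carrier_mat n n \<Longrightarrow> triu A \<in> carrier_mat n n"
  by (simp add: triu_def)

lemma splitting_mult_vec_index:
  assumes A: "A \<in> carrier_mat n n" and v: "v \<in> carrier_vec n" and i: "i < n"
  shows "(tril A *\<^sub>v v) $ i = A $$ (i, i) * v $ i + (\<Sum>j<i. A $$ (i, j) * v $ j)"
    and "(triu A *\<^sub>v v) $ i = A $$ (i, i) * v $ i + (\<Sum>j\<in>{i<..<n}. A $$ (i, j) * v $ j)"
    and "((tril A - A) *\<^sub>v v) $ i = - (\<Sum>j\<in>{i<..<n}. A $$ (i, j) * v $ j)"
    and "((triu A - A) *\<^sub>v v) $ i = - (\<Sum>j<i. A $$ (i, j) * v $ j)"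
proof -
  note L = tril_carrier[OF A] and U = triu_carrier[OF A] and N = minus_carrier_mat[OF A]
  have lower: "tril A $$ (i, j) = A $$ (i, j)" "triu A $$ (i, j) = 0"
    "(tril A - A) $$ (i, j) = 0" "(triu A - A) $$ (i, j) = - A $$ (i, j)" if "j < i" for j
    using A i that less_trans[OF that i] by (simp_all add: tril_def triu_def)
  have upper: "tril A $$ (i, j) = 0" "triu A $$ (i, j) = A $$ (i, j)"
    "(tril A - A) $$ (i, j) = - A $$ (i, j)" "(triu A - A) $$ (i, j) = 0" if "i < j" "j < n" for j
    using A i that by (simp_all add: tril_def triu_def)
  have diag: "tril A $$ (i, i) = A $$ (i, i)" "triu A $$ (i, i) = A $$ (i, i)"
    "(tril A - A) $$ (i, i) = 0" "(triu A - A) $$ (i, i) = 0"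
    using A i by (simp_all add: tril_def triu_def)
  show "(tril A *\<^sub>v v) $ i = A $$ (i, i) * v $ i + (\<Sum>j<i. A $$ (i, j) * v $ j)"
    using sum_lessThan_split_at[OF i, where f = "\<lambda>j. tril A $$ (i, j) * v $ j"
        and g = "\<lambda>j. A $$ (i, j) * v $ j" and h = "\<lambda>j. 0"]
    by (simp add: mult_mat_vec_index_sum[OF L v i] lower upper diag)
  show "(triu A *\<^sub>v v) $ i = A $$ (i, i) * v $ i + (\<Sum>j\<in>{i<..<n}. A $$ (i, j) * v $ j)"
    using sum_lessThan_split_at[OF i, where f = "\<lambda>j. triu A $$ (i, j) * v $ j"
        and g = "\<lambda>j. 0" and h = "\<lambda>j. A $$ (i, j) * v $ j"]
    by (simp add: mult_mat_vec_index_sum[OF U v i] lower upper diag)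
  show "((tril A - A) *\<^sub>v v) $ i = - (\<Sum>j\<in>{i<..<n}. A $$ (i, j) * v $ j)"
    using sum_lessThan_split_at[OF i, where f = "\<lambda>j. (tril A - A) $$ (i, j) * v $ j"
        and g = "\<lambda>j. 0" and h = "\<lambda>j. - (A $$ (i, j) * v $ j)"]
    by (simp add: mult_mat_vec_index_sum[OF N v i] lower upper diag sum_negf)
  show "((triu A - A) *\<^sub>v v) $ i = - (\<Sum>j<i. A $$ (i, j) * v $ j)"
    using sum_lessThan_split_at[OF i, where f = "\<lambda>j. (triu A - A) $$ (i, j) * v $ j"
        and g = "\<lambda>j. - (A $$ (i, j) * v $ j)" and h = "\<lambda>j. 0"]
    by (simp add: mult_mat_vec_index_sum[OF N v i] lower upper diag sum_negf)
qed

lemma Z_matrix_triangular_splitting: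
  assumes "A \<in> carrier_mat n n" "Z_matrix A"
  shows "Z_matrix (triu A)" "nonneg_mat (tril A - A)" "nonneg_mat (triu A - A)"
  using assms by (auto simp: Z_matrix_def nonneg_mat_def tril_def triu_def)

lemma invertible_tril:
  assumes A: "A \<in> carrier_mat n n" and diag: "\<And>i. i < n \<Longrightarrow> A $$ (i, i) \<noteq> 0"
  shows "invertible_mat (tril A)"
proof (rule invertible_mat_if_det_nonzero)
  show L: "tril A \<in> carrier_mat n n" by (rule tril_carrier[OF A])
  have "det (tril A) = (\<Prod>i = 0..<n. A $$ (i, i))"
    using det_lower_triangular[OF _ L] A by (simp add: tril_def prod_list_diag_prod)
  then show "det (tril A) \<noteq> 0" using diag by simp
qed

lemma invertible_triu:
  assumes A: "A \<in> carrier_mat n n" and diag: "\<And>i. i < n \<Longrightarrow> A $$ (i, i) \<noteq> 0"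
  shows "invertible_mat (triu A)"
proof (rule invertible_mat_if_det_nonzero)
  show U: "triu A \<in> carrier_mat n n" by (rule triu_carrier[OF A])
  have "det (triu A) = (\<Prod>i = 0..<n. A $$ (i, i))"
    using det_upper_triangular[OF _ U] A by (simp add: triu_def upper_triangular_def prod_list_diag_prod)
  then show "det (triu A) \<noteq> 0" using diag by simp
qed

lemma nonneg_if_tril_mult_vec_nonneg:
  assumes A: "A \<in> carrier_mat n n" "Z_matrix A" and diag: "\<And>i. i < n \<Longrightarrow> 0 < A $$ (i, i)"
    and w: "w \<in> carrier_vec n" "0\<^sub>v n \<le> tril A *\<^sub>v w"
  shows "0\<^sub>v n \<le> w"
proof -
  have "0 \<le> w $ i" if "i < n" for i
    using that
  proof (induction i rule: less_induct)
    case (less i)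
    have "0 \<le> A $$ (i, i) * w $ i + (\<Sum>j<i. A $$ (i, j) * w $ j)"
      using w less.prems splitting_mult_vec_index(1)[OF A(1) w(1) less.prems]
      by (auto simp: less_eq_vec_def)
    moreover have "A $$ (i, j) * w $ j \<le> 0" if "j < i" for j
      using less.IH[OF that] that less.prems A by (intro mult_nonpos_nonneg) (auto simp: Z_matrix_def)
    then have "(\<Sum>j<i. A $$ (i, j) * w $ j) \<le> 0" by (intro sum_nonpos) auto
    ultimately have "0 \<le> A $$ (i, i) * w $ i" by linarith
    then show ?case using diag[OF less.prems] by (simp add: zero_le_mult_iff)
  qed
  then show ?thesis using w(1) by (simp add: less_eq_vec_def)
qed

lemma nonneg_mat_inv_tril:
  assumes A: "A \<in> carrier_mat n n" "Z_matrix A" and diag: "\<And>i. i < n \<Longrightarrow> 0 < A $$ (i, i)"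
  shows "nonneg_mat (mat_inv (tril A))"
proof -
  note L = tril_carrier[OF A(1)]
  have "invertible_mat (tril A)"
    by (rule invertible_tril[OF A(1)]) (metis diag less_irrefl)
  note Li = mat_inv_correct[OF L this]
  have col: "0\<^sub>v n \<le> col (mat_inv (tril A)) k" if "k < n" for k
  proof (rule nonneg_if_tril_mult_vec_nonneg)
    show "A \<in> carrier_mat n n" "Z_matrix A" "\<And>i. i < n \<Longrightarrow> 0 < A $$ (i, i)" by (fact A diag)+
    show "col (mat_inv (tril A)) k \<in> carrier_vec n" using Li(1) by (intro carrier_vecI) simp
    have "tril A *\<^sub>v col (mat_inv (tril A)) k = col (tril A * mat_inv (tril A)) k"
      by (rule col_mult2[OF L Li(1) that, symmetric])
    also have "\<dots> = unit_vec n k" unfolding Li(2) using that by simp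
    finally show "0\<^sub>v n \<le> tril A *\<^sub>v col (mat_inv (tril A)) k"
      by (simp add: less_eq_vec_def unit_vec_def)
  qed
  show ?thesis unfolding nonneg_mat_def
  proof (intro allI impI)
    fix i k assume "i < dim_row (mat_inv (tril A))" "k < dim_col (mat_inv (tril A))"
    then have i: "i < n" and k: "k < n" using Li(1) by auto
    then have "0 \<le> col (mat_inv (tril A)) k $ i" using col[OF k] Li(1) by (simp add: less_eq_vec_def)
    then show "0 \<le> mat_inv (tril A) $$ (i, k)" using Li(1) i k by simp
  qed
qed

section \<open>Comparison of the two Gauss-Seidel splittings\<close>

lemma of_real_mat_inv_mult_eigenvector:
  assumes M: "M \<in> carrier_mat n n" "invertible_mat M" and N: "N \<in> carrier_mat n n"
    and z: "z \<in> carrier_vec n" and ev: "map_mat complex_of_real (mat_inv M * N) *\<^sub>v z = \<mu> \<cdot>\<^sub>v z"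
  shows "\<mu> \<cdot>\<^sub>v (map_mat complex_of_real M *\<^sub>v z) = map_mat complex_of_real N *\<^sub>v z"
proof -
  let ?c = "map_mat complex_of_real"
  note Mi = mat_inv_correct[OF M]
  have "M * (mat_inv M * N) = N" using assoc_mult_mat[OF M(1) Mi(1) N] Mi(2) N by simp
  then have MP: "?c M * ?c (mat_inv M * N) = ?c N"
    by (metis of_real_hom.mat_hom_mult[OF M(1)] Mi(1) N mult_carrier_mat)
  have "\<mu> \<cdot>\<^sub>v (?c M *\<^sub>v z) = ?c M *\<^sub>v (?c (mat_inv M * N) *\<^sub>v z)"
    using ev M(1) z by (simp add: mult_mat_vec)
  also have "\<dots> = (?c M * ?c (mat_inv M * N)) *\<^sub>v z"
    using M(1) Mi(1) N z by (intro assoc_mult_mat_vec[symmetric]) auto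
  finally show ?thesis unfolding MP .
qed

lemma triu_splitting_eigenvalue_norm_ineq:
  assumes A: "A \<in> carrier_mat n n" "Z_matrix A" and diag: "\<And>i. i < n \<Longrightarrow> 0 < A $$ (i, i)"
    and \<mu>: "\<mu> \<in> spectrum (map_mat complex_of_real (mat_inv (triu A) * (triu A - A)))"
  obtains x where "x \<in> carrier_vec n" "0\<^sub>v n \<le> x" "x \<noteq> 0\<^sub>v n"
    "cmod \<mu> \<cdot>\<^sub>v (triu A *\<^sub>v x) \<le> (triu A - A) *\<^sub>v x"
proof -
  let ?c = "map_mat complex_of_real"
  define U where "U = triu A"
  define N where "N = triu A - A"
  have U: "U \<in> carrier_mat n n" unfolding U_def by (rule triu_carrier[OF A(1)])
  have N: "N \<in> carrier_mat n n" unfolding N_def by (rule minus_carrier_mat[OF A(1)])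
  have invU: "invertible_mat U" unfolding U_def by (rule invertible_triu[OF A(1)]) (metis diag less_irrefl)
  have "\<mu> \<in> spectrum (?c (mat_inv U * N))" using \<mu> by (simp add: U_def N_def)
  then obtain z where z: "z \<in> carrier_vec n" "z \<noteq> 0\<^sub>v n" and ev: "?c (mat_inv U * N) *\<^sub>v z = \<mu> \<cdot>\<^sub>v z"
    using mat_inv_mult_carrier[OF U invU N] unfolding spectrum_def eigenvalue_def eigenvector_def by auto
  define x where "x = map_vec cmod z"
  obtain i where i: "i < n" "z $ i \<noteq> 0" using vec_nonzero_index[OF z] .
  have x: "x \<in> carrier_vec n" "0\<^sub>v n \<le> x" using z(1) by (auto simp: x_def less_eq_vec_def)
  have x0: "x \<noteq> 0\<^sub>v n"
  proof
    assume "x = 0\<^sub>v n"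
    then have "x $ i = 0" using i(1) by simp
    then show False using z(1) i by (simp add: x_def)
  qed
  have Ux: "U *\<^sub>v x \<le> map_vec cmod (?c U *\<^sub>v z)" unfolding x_def
  proof (rule Z_matrix_mult_norm_vec_le[OF U _ _ z(1)])
    show "Z_matrix U" using Z_matrix_triangular_splitting(1)[OF A] by (simp add: U_def)
    show "0 \<le> U $$ (k, k)" if "k < n" for k using A diag[OF that] that by (simp add: U_def triu_def)
  qed
  have "cmod \<mu> \<cdot>\<^sub>v (U *\<^sub>v x) \<le> cmod \<mu> \<cdot>\<^sub>v map_vec cmod (?c U *\<^sub>v z)"
    using smult_vec_mono[OF norm_ge_zero Ux] .
  also have "\<dots> = map_vec cmod (\<mu> \<cdot>\<^sub>v (?c U *\<^sub>v z))" by (auto simp: norm_mult)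
  also have "\<dots> \<le> N *\<^sub>v x"
    unfolding of_real_mat_inv_mult_eigenvector[OF U invU N z(1) ev] x_def
    using Z_matrix_triangular_splitting(3)[OF A] N z
    by (intro norm_mult_vec_le_nonneg_mat) (auto simp: N_def)
  finally show ?thesis using that x x0 unfolding U_def N_def by blast
qed

lemma substochastic_triu_splitting_ratio_less_1:
  assumes T: "T \<in> carrier_mat n n" "substochastic T" and inv: "invertible_mat (1\<^sub>m n - T)"
    and x: "x \<in> carrier_vec n" "0\<^sub>v n \<le> x" "x \<noteq> 0\<^sub>v n"
    and ineq: "t \<cdot>\<^sub>v (triu (1\<^sub>m n - T) *\<^sub>v x) \<le> (triu (1\<^sub>m n - T) - (1\<^sub>m n - T)) *\<^sub>v x"
  shows "t < 1"
proof (rule ccontr)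
  assume "\<not> t < 1"
  define A where "A = 1\<^sub>m n - T"
  define U where "U = triu A"
  have A: "A \<in> carrier_mat n n" "Z_matrix A"
    using T Z_matrix_one_minus_nonneg[OF T(1)] by (auto simp: A_def substochastic_def)
  have U: "U \<in> carrier_mat n n" unfolding U_def by (rule triu_carrier[OF A(1)])
  have N: "U - A \<in> carrier_mat n n" unfolding U_def by (rule minus_carrier_mat[OF A(1)])
  have "(U - A) *\<^sub>v 0\<^sub>v n \<le> (U - A) *\<^sub>v x"
    using nonneg_mat_mult_vec_mono[OF N _ x(2,1)] Z_matrix_triangular_splitting(3)[OF A]
    by (simp add: U_def)
  then have Nx: "0\<^sub>v n \<le> (U - A) *\<^sub>v x" using mult_mat_vec_zero[OF N] by simp
  have "((U - A) *\<^sub>v x) $ i = (U *\<^sub>v x) $ i - (A *\<^sub>v x) $ i" if "i < n" for i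
    using U A x(1) that by (simp add: minus_mult_distrib_mat_vec)
  moreover have "(A *\<^sub>v x) $ i = x $ i - (T *\<^sub>v x) $ i" if "i < n" for i
    using T(1) x(1) that by (simp add: A_def one_minus_mult_mat_vec)
  moreover have "(U *\<^sub>v x) $ i \<le> ((U - A) *\<^sub>v x) $ i" if "i < n" for i
  proof -
    have "t * (U *\<^sub>v x) $ i \<le> ((U - A) *\<^sub>v x) $ i" "0 \<le> ((U - A) *\<^sub>v x) $ i"
      using ineq Nx that U by (auto simp: less_eq_vec_def U_def A_def)
    moreover have "(U *\<^sub>v x) $ i \<le> t * (U *\<^sub>v x) $ i" if "0 \<le> (U *\<^sub>v x) $ i"
      using that \<open>\<not> t < 1\<close> by (simp add: mult_le_cancel_right1)
    ultimately show ?thesis by linarith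
  qed
  ultimately have "x \<le> T *\<^sub>v x" using T(1) x(1) by (auto simp: less_eq_vec_def)
  then show False using not_invertible_one_minus_substochastic[OF T x] inv by blast
qed

lemma substochastic_triu_splitting_eigenvalue_less_1:
  assumes T: "T \<in> carrier_mat n n" "substochastic T" and inv: "invertible_mat (1\<^sub>m n - T)"
    and \<mu>: "\<mu> \<in> spectrum (map_mat complex_of_real
      (mat_inv (triu (1\<^sub>m n - T)) * (triu (1\<^sub>m n - T) - (1\<^sub>m n - T))))"
  shows "cmod \<mu> < 1"
proof -
  have A: "1\<^sub>m n - T \<in> carrier_mat n n" "Z_matrix (1\<^sub>m n - T)"
    using T Z_matrix_one_minus_nonneg[OF T(1)] by (auto simp: substochastic_def)
  have diag: "0 < (1\<^sub>m n - T) $$ (i, i)" if "i < n" for i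
    using substochastic_diag_less_1[OF T inv that] T(1) that by simp
  obtain x where "x \<in> carrier_vec n" "0\<^sub>v n \<le> x" "x \<noteq> 0\<^sub>v n"
    and "cmod \<mu> \<cdot>\<^sub>v (triu (1\<^sub>m n - T) *\<^sub>v x) \<le> (triu (1\<^sub>m n - T) - (1\<^sub>m n - T)) *\<^sub>v x"
    using triu_splitting_eigenvalue_norm_ineq[OF A _ \<mu>] diag by blast
  then show ?thesis by (rule substochastic_triu_splitting_ratio_less_1[OF T inv])
qed

lemma lower_hessenberg_upper_row_sum:
  assumes A: "A \<in> carrier_mat n n" "lower_hessenberg A" and i: "i < n"
  shows "(\<Sum>j\<in>{i<..<n}. A $$ (i, j) * (w j * v $ j)) = w (Suc i) * (\<Sum>j\<in>{i<..<n}. A $$ (i, j) * v $ j)"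
  unfolding sum_distrib_left
proof (rule sum.cong)
  fix j assume j: "j \<in> {i<..<n}"
  show "A $$ (i, j) * (w j * v $ j) = w (Suc i) * (A $$ (i, j) * v $ j)"
  proof (cases "j = Suc i")
    case False
    with j have "Suc i < j" by auto
    then have "A $$ (i, j) = 0" using A i j by (auto simp: lower_hessenberg_def)
    then show ?thesis by simp
  qed simp
qed simp

text \<open>Row i of the hypothesis is multiplied by t^i. The only strictly upper entry of row i is
  (i, i+1), so its upper part becomes exactly that of y; for j < i, t <= 1 gives
  t^i >= t^(j+1), which bounds its lower part.\<close>
lemma lower_hessenberg_rescale:
  assumes A: "A \<in> carrier_mat n n" "Z_matrix A" "lower_hessenberg A" and t: "0 < t" "t \<le> 1"
    and x: "x \<in> carrier_vec n" "0\<^sub>v n \<le> x" and ineq: "t \<cdot>\<^sub>v (triu A *\<^sub>v x) \<le> (triu A - A) *\<^sub>v x"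
  defines "y \<equiv> vec n (\<lambda>i. t ^ i * x $ i)"
  shows "t \<cdot>\<^sub>v (tril A *\<^sub>v y) \<le> (tril A - A) *\<^sub>v y"
proof -
  have y: "y \<in> carrier_vec n" by (simp add: y_def)
  have "t * (tril A *\<^sub>v y) $ i \<le> ((tril A - A) *\<^sub>v y) $ i" if i: "i < n" for i
  proof -
    let ?lo = "\<lambda>v. \<Sum>j<i. A $$ (i, j) * v $ j" and ?up = "\<lambda>v. \<Sum>j\<in>{i<..<n}. A $$ (i, j) * v $ j"
    note row = splitting_mult_vec_index[OF A(1) _ i]
    have "t * (triu A *\<^sub>v x) $ i \<le> ((triu A - A) *\<^sub>v x) $ i"
      using ineq i A(1) by (auto simp: less_eq_vec_def triu_def)
    then have hyp: "t * (A $$ (i, i) * x $ i + ?up x) \<le> - ?lo x"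
      unfolding row[OF x(1)] .
    have "?up y = (\<Sum>j\<in>{i<..<n}. A $$ (i, j) * (t ^ j * x $ j))" by (rule sum.cong) (auto simp: y_def)
    also have "\<dots> = t ^ Suc i * ?up x" by (rule lower_hessenberg_upper_row_sum[OF A(1,3) i])
    finally have up: "?up y = t ^ Suc i * ?up x" .
    have lo: "t * ?lo y \<le> t ^ i * ?lo x"
      unfolding sum_distrib_left
    proof (rule sum_mono)
      fix j assume "j \<in> {..<i}"
      then have j: "j < i" "j < n" using i by auto
      have "A $$ (i, j) * x $ j \<le> 0"
        using A(1,2) x(1,2) i j by (intro mult_nonpos_nonneg) (auto simp: Z_matrix_def less_eq_vec_def)
      moreover have "t ^ i \<le> t ^ Suc j" using t j by (intro power_decreasing) auto
      ultimately have "t ^ Suc j * (A $$ (i, j) * x $ j) \<le> t ^ i * (A $$ (i, j) * x $ j)"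
        by (rule mult_right_mono_neg[rotated])
      then show "t * (A $$ (i, j) * y $ j) \<le> t ^ i * (A $$ (i, j) * x $ j)"
        using j by (simp add: y_def ac_simps)
    qed
    have "t ^ i * (t * (A $$ (i, i) * x $ i + ?up x)) \<le> t ^ i * (- ?lo x)"
      using hyp t by (intro mult_left_mono) auto
    moreover have "y $ i = t ^ i * x $ i" using i by (simp add: y_def)
    ultimately have "t * (A $$ (i, i) * y $ i + ?lo y) \<le> - ?up y"
      using up lo by (simp add: algebra_simps)
    then show ?thesis using row[OF y] by simp
  qed
  then show ?thesis using A(1) y by (simp add: less_eq_vec_def tril_def)
qed

lemma rho_tril_splitting_ge:
  assumes A: "A \<in> carrier_mat n n" "Z_matrix A" and diag: "\<And>i. i < n \<Longrightarrow> 0 < A $$ (i, i)"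
    and y: "y \<in> carrier_vec n" "0\<^sub>v n \<le> y" "y \<noteq> 0\<^sub>v n" and t: "0 < t"
    and ineq: "t \<cdot>\<^sub>v (tril A *\<^sub>v y) \<le> (tril A - A) *\<^sub>v y"
  shows "t \<le> rho (mat_inv (tril A) * (tril A - A))"
proof (rule collatz_wielandt_lower_bound[OF _ _ y t(1)])
  define L where "L = tril A"
  have L: "L \<in> carrier_mat n n" unfolding L_def by (rule tril_carrier[OF A(1)])
  have N: "L - A \<in> carrier_mat n n" unfolding L_def by (rule minus_carrier_mat[OF A(1)])
  have "invertible_mat L" unfolding L_def by (rule invertible_tril[OF A(1)]) (metis diag less_irrefl)
  note Li = mat_inv_correct[OF L this]
  have Li_nonneg: "nonneg_mat (mat_inv L)" unfolding L_def
    by (rule nonneg_mat_inv_tril[OF A]) (fact diag)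
  show "mat_inv (tril A) * (tril A - A) \<in> carrier_mat n n" using Li(1) N by (simp add: L_def)
  show "nonneg_mat (mat_inv (tril A) * (tril A - A))"
    using nonneg_mat_mult[OF Li(1) N Li_nonneg] Z_matrix_triangular_splitting(2)[OF A]
    by (simp add: L_def)
  have "t \<cdot>\<^sub>v y = mat_inv L *\<^sub>v (t \<cdot>\<^sub>v (L *\<^sub>v y))"
    using L Li y(1) by (simp add: mult_mat_vec assoc_mult_mat_vec[symmetric, of _ n n _ n])
  also have "\<dots> \<le> mat_inv L *\<^sub>v ((L - A) *\<^sub>v y)"
    using nonneg_mat_mult_vec_mono[OF Li(1) Li_nonneg] ineq N y(1) by (simp add: L_def)
  also have "\<dots> = (mat_inv L * (L - A)) *\<^sub>v y" using Li(1) N y(1) by simp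
  finally show "t \<cdot>\<^sub>v y \<le> (mat_inv (tril A) * (tril A - A)) *\<^sub>v y" by (simp add: L_def)
qed

lemma rho_tril_splitting_ge_hessenberg:
  assumes A: "A \<in> carrier_mat n n" "Z_matrix A" "lower_hessenberg A"
    and diag: "\<And>i. i < n \<Longrightarrow> 0 < A $$ (i, i)" and t: "0 < t" "t \<le> 1"
    and x: "x \<in> carrier_vec n" "0\<^sub>v n \<le> x" "x \<noteq> 0\<^sub>v n"
    and ineq: "t \<cdot>\<^sub>v (triu A *\<^sub>v x) \<le> (triu A - A) *\<^sub>v x"
  shows "t \<le> rho (mat_inv (tril A) * (tril A - A))"
proof (rule rho_tril_splitting_ge[OF A(1,2) _ _ _ _ t(1) lower_hessenberg_rescale[OF A t x(1,2) ineq]])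
  let ?y = "vec n (\<lambda>i. t ^ i * x $ i)"
  show "0 < A $$ (i, i)" if "i < n" for i using diag that .
  show "?y \<in> carrier_vec n" by simp
  show "0\<^sub>v n \<le> ?y" using x(1,2) t(1) by (simp add: less_eq_vec_def)
  obtain i where i: "i < n" "x $ i \<noteq> 0" using vec_nonzero_index[OF x(1,3)] .
  show "?y \<noteq> 0\<^sub>v n"
  proof
    assume "?y = 0\<^sub>v n"
    then have "?y $ i = 0" using i(1) by simp
    then show False using i t(1) by simp
  qed
qed

lemma rho_triu_splitting_le_rho_tril_splitting:
  assumes A: "A \<in> carrier_mat n n" "Z_matrix A" "lower_hessenberg A"
    and diag: "\<And>i. i < n \<Longrightarrow> 0 < A $$ (i, i)"
    and ev_le_1: "\<And>\<mu>. \<mu> \<in> spectrum (map_mat complex_of_real (mat_inv (triu A) * (triu A - A)))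
      \<Longrightarrow> cmod \<mu> \<le> 1"
  shows "rho (mat_inv (triu A) * (triu A - A)) \<le> rho (mat_inv (tril A) * (tril A - A))"
proof -
  have "invertible_mat (tril A)" by (rule invertible_tril[OF A(1)]) (metis diag less_irrefl)
  then have PG: "mat_inv (tril A) * (tril A - A) \<in> carrier_mat n n"
    by (rule mat_inv_mult_carrier[OF tril_carrier[OF A(1)] _ minus_carrier_mat[OF A(1)]])
  have "invertible_mat (triu A)" by (rule invertible_triu[OF A(1)]) (metis diag less_irrefl)
  then have PA: "mat_inv (triu A) * (triu A - A) \<in> carrier_mat n n"
    by (rule mat_inv_mult_carrier[OF triu_carrier[OF A(1)] _ minus_carrier_mat[OF A(1)]])
  show ?thesis
  proof (cases "n = 0")
    case True
    have "mat_inv (triu A) * (triu A - A) = mat_inv (tril A) * (tril A - A)"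
      using carrier_matD[OF PG] carrier_matD[OF PA] True by (intro eq_matI) (simp_all del: dim_row_mat)
    then show ?thesis by simp
  next
    case False
    show ?thesis
    proof (rule rho_le_if_eigenvalues_le[OF PA _ rho_nonneg[OF PG]])
      fix \<mu> assume \<mu>: "\<mu> \<in> spectrum (map_mat complex_of_real (mat_inv (triu A) * (triu A - A)))" "\<mu> \<noteq> 0"
      obtain x where x: "x \<in> carrier_vec n" "0\<^sub>v n \<le> x" "x \<noteq> 0\<^sub>v n"
        and ineq: "cmod \<mu> \<cdot>\<^sub>v (triu A *\<^sub>v x) \<le> (triu A - A) *\<^sub>v x"
        using triu_splitting_eigenvalue_norm_ineq[OF A(1,2) _ \<mu>(1)] diag by blast
      show "cmod \<mu> \<le> rho (mat_inv (tril A) * (tril A - A))"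
        using rho_tril_splitting_ge_hessenberg[OF A _ _ ev_le_1[OF \<mu>(1)] x ineq] diag \<mu>(2) by simp
    qed (use False in simp)+
  qed
qed

theorem theorem8:
  fixes T :: "real mat" and n :: nat
  assumes "T \<in> carrier_mat n n"
    and "substochastic T"
    and "lower_hessenberg (1\<^sub>m n - T)"
    and "invertible_M_matrix (1\<^sub>m n - T)"
  shows "rho (mat_inv (tril (1\<^sub>m n - T)) * (tril (1\<^sub>m n - T) - (1\<^sub>m n - T)))
         \<ge> rho (mat_inv (triu (1\<^sub>m n - T)) * (triu (1\<^sub>m n - T) - (1\<^sub>m n - T)))"
proof -
  have inv: "invertible_mat (1\<^sub>m n - T)" using assms(4) by (simp add: invertible_M_matrix_def)
  have A: "1\<^sub>m n - T \<in> carrier_mat n n" "Z_matrix (1\<^sub>m n - T)"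
    using assms(1,2) Z_matrix_one_minus_nonneg[OF assms(1)] by (auto simp: substochastic_def)
  show ?thesis
  proof (rule rho_triu_splitting_le_rho_tril_splitting[OF A assms(3)])
    show "0 < (1\<^sub>m n - T) $$ (i, i)" if "i < n" for i
      using substochastic_diag_less_1[OF assms(1,2) inv that] assms(1) that by simp
    show "cmod \<mu> \<le> 1"
      if "\<mu> \<in> spectrum (map_mat complex_of_real
        (mat_inv (triu (1\<^sub>m n - T)) * (triu (1\<^sub>m n - T) - (1\<^sub>m n - T))))" for \<mu>
      using substochastic_triu_splitting_eigenvalue_less_1[OF assms(1,2) inv that] by simp
  qed
qed

end
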